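(* Let $A$ be a left counital bialgebra. Then $\Delta_T$ is coassociative: $(\mathrm{id}\otimes\Delta_T)\Delta_T=(\Delta_T\otimes\mathrm{id})\Delta_T$ on $Ш(A)$.
   Context: Throughout, $\mathbf{k}$ is a commutative unital ring, all algebras are unital commutative $\mathbf{k}$-algebras, tensor products are over $\mathbf{k}$. A left counital bialgebra $(H,m,\mu,\Delta,\varepsilon)$ is an algebra $H$ with algebra homomorphisms $\Delta:H\to H\otimes H$ (coassociative) and $\varepsilon:H\to\mathbf{k}$ satisfying left counicity $(\varepsilon\otimes\mathrm{id})\Delta=\beta_\ell$, where $\beta_\ell(u)=1\otimes u$; right counicity is not required. For an algebra $A$ with unit $1_A$, $Ш(A)=\bigoplus_{n\ge1}A^{\otimes n}$, $P_r(\mathfrak a)=1_A\otimes\mathfrak a$, and the product $\diamond$ is defined bilinearly on pure tensors $\mathfrak a=a_1\otimes\mathfrak a'\in A^{\otimes m}$, $\mathfrak b=b_1\otimes\mathfrak b'\in A^{\otimes n}$ by: $a_1b_1$ if $m=n=1$; $a_1b_1\otimes\mathfrak b'$ if $m=1,n\ge2$; $a_1b_1\otimes\mathfrak a'$ if $m\ge2,n=1$; $a_1b_1\otimes\big(\mathfrak a'\diamond(1_A\otimes\mathfrak b')+(1_A\otimes\mathfrak a')\diamond\mathfrak b'-1_A\otimes(\mathfrak a'\diamond\mathfrak b')\big)$ if $m,n\ge2$. $Ш(A)\otimes Ш(A)$ has the product $\bullet$, $(x\otimes y)\bullet(x'\otimes y')=(x\diamond x')\otimes(y\diamond y')$, and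 $A\otimes A\subseteq Ш(A)\otimes Ш(A)$ via $A=A^{\otimes1}$. When $A$ is a left counital bialgebra with coproduct $\Delta_A$, the linear map $\Delta_T:Ш(A)\to Ш(A)\otimes Ш(A)$ is defined on pure tensors by induction on tensor length: $\Delta_T(a)=\Delta_A(a)$ for $a\in A$, and for $\mathfrak a'\in A^{\otimes n}$, $\Delta_T(1_A\otimes\mathfrak a')=(\mathrm{id}\otimes P_r)\Delta_T(\mathfrak a')$ and $\Delta_T(a_1\otimes\mathfrak a')=\Delta_A(a_1)\bullet(\mathrm{id}\otimes P_r)\Delta_T(\mathfrak a')$. *)

theory Defs
  imports "HOL-Library.Poly_Mapping"
begin

text \<open>
The k-algebra A is the commutative ring 'a together with a ring homomorphism
phi :: 'k => 'a (so that c . a = phi c * a).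
A "word" is a list of tensor factors, each factor a list of elements of A;
the word [l1, ..., lr] with li = [a_i1, ..., a_in_i] stands for the pure tensor
(a_11 (x) ... (x) a_1n_1) (x) ... (x) (a_r1 (x) ... (x) a_rn_r)
in Sh(A)^{(x) r}.  Elements are represented by finitely supported k-linear
combinations of words (type 'a list list =>0 'k); two representatives denote
the same tensor iff their difference lies in the k-submodule generated by the
multilinearity relations (teq).
\<close>

type_synonym ('a, 'k) comb = "'a list list \<Rightarrow>\<^sub>0 'k"

definition smul :: "'k::comm_ring_1 \<Rightarrow> ('b \<Rightarrow>\<^sub>0 'k) \<Rightarrow> ('b \<Rightarrow>\<^sub>0 'k)" where
  "smul c x = Poly_Mapping.map (\<lambda>v. c * v) x"

definition lin :: "('b \<Rightarrow> ('c \<Rightarrow>\<^sub>0 'k::comm_ring_1)) \<Rightarrow> ('b \<Rightarrow>\<^sub>0 'k) \<Rightarrow> ('c \<Rightarrow>\<^sub>0 'k)" where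
  "lin f x = (\<Sum>w\<in>Poly_Mapping.keys x. smul (Poly_Mapping.lookup x w) (f w))"

definition basis :: "'b \<Rightarrow> ('b \<Rightarrow>\<^sub>0 'k::comm_ring_1)" where
  "basis w = Poly_Mapping.single w 1"

definition upd :: "'a list list \<Rightarrow> nat \<Rightarrow> nat \<Rightarrow> 'a \<Rightarrow> 'a list list" where
  "upd w i j a = w[i := (w ! i)[j := a]]"

inductive_set trel :: "('k::comm_ring_1 \<Rightarrow> 'a::comm_ring_1) \<Rightarrow> ('a, 'k) comb set"
  for phi :: "'k \<Rightarrow> 'a" where
  zero: "0 \<in> trel phi"
| add: "x \<in> trel phi \<Longrightarrow> y \<in> trel phi \<Longrightarrow> x + y \<in> trel phi"
| smul: "x \<in> trel phi \<Longrightarrow> smul c x \<in> trel phi"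
| additive: "i < length w \<Longrightarrow> j < length (w ! i) \<Longrightarrow>
     basis (upd w i j (a + b)) - basis (upd w i j a) - basis (upd w i j b) \<in> trel phi"
| homog: "i < length w \<Longrightarrow> j < length (w ! i) \<Longrightarrow>
     basis (upd w i j (phi c * a)) - smul c (basis (upd w i j a)) \<in> trel phi"

definition teq :: "('k::comm_ring_1 \<Rightarrow> 'a::comm_ring_1) \<Rightarrow> ('a, 'k) comb \<Rightarrow> ('a, 'k) comb \<Rightarrow> bool" where
  "teq phi x y \<longleftrightarrow> x - y \<in> trel phi"

definition tens :: "('a, 'k::comm_ring_1) comb \<Rightarrow> ('a, 'k) comb \<Rightarrow> ('a, 'k) comb" where
  "tens x y = lin (\<lambda>u. lin (\<lambda>v. basis (u @ v)) y) x"

definition pre :: "'a \<Rightarrow> ('a list \<Rightarrow>\<^sub>0 'k::comm_ring_1) \<Rightarrow> ('a list \<Rightarrow>\<^sub>0 'k)" where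
  "pre a x = lin (\<lambda>l. basis (a # l)) x"

fun dia :: "'a::comm_ring_1 list \<Rightarrow> 'a list \<Rightarrow> ('a list \<Rightarrow>\<^sub>0 'k::comm_ring_1)" where
  "dia [] m = 0"
| "dia l [] = 0"
| "dia [a] [b] = basis [a * b]"
| "dia [a] (b # b' # bs) = basis (a * b # b' # bs)"
| "dia (a # a' # as) [b] = basis (a * b # a' # as)"
| "dia (a # a' # as) (b # b' # bs) =
     pre (a * b) (dia (a' # as) (1 # b' # bs) + dia (1 # a' # as) (b' # bs)
                  - pre 1 (dia (a' # as) (b' # bs)))"

definition wrap :: "('a list \<Rightarrow>\<^sub>0 'k::comm_ring_1) \<Rightarrow> ('a, 'k) comb" where
  "wrap x = lin (\<lambda>l. basis [l]) x"

fun bulW :: "'a::comm_ring_1 list list \<Rightarrow> 'a list list \<Rightarrow> ('a, 'k::comm_ring_1) comb" where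
  "bulW [] [] = basis []"
| "bulW (l # u) (m # v) = tens (wrap (dia l m)) (bulW u v)"
| "bulW _ _ = 0"

definition bullet :: "('a::comm_ring_1, 'k::comm_ring_1) comb \<Rightarrow> ('a, 'k) comb \<Rightarrow> ('a, 'k) comb" where
  "bullet x y = lin (\<lambda>u. lin (\<lambda>v. bulW u v) y) x"

definition idPr :: "('a::comm_ring_1, 'k::comm_ring_1) comb \<Rightarrow> ('a, 'k) comb" where
  "idPr x = lin (\<lambda>w. case w of [l1, l2] \<Rightarrow> basis [l1, 1 # l2] | _ \<Rightarrow> 0) x"

fun DeltaT :: "('a::comm_ring_1 \<Rightarrow> ('a, 'k::comm_ring_1) comb) \<Rightarrow> 'a list \<Rightarrow> ('a, 'k) comb" where
  "DeltaT D [] = 0"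
| "DeltaT D [a] = D a"
| "DeltaT D (a # b # l) =
     (if a = 1 then idPr (DeltaT D (b # l))
      else bullet (D a) (idPr (DeltaT D (b # l))))"

definition tens_id :: "('a list \<Rightarrow> ('a, 'k::comm_ring_1) comb) \<Rightarrow> 'a list list \<Rightarrow> ('a, 'k) comb" where
  "tens_id f w = (case w of [l1, l2] \<Rightarrow> tens (f l1) (basis [l2]) | _ \<Rightarrow> 0)"

definition id_tens :: "('a list \<Rightarrow> ('a, 'k::comm_ring_1) comb) \<Rightarrow> 'a list list \<Rightarrow> ('a, 'k) comb" where
  "id_tens f w = (case w of [l1, l2] \<Rightarrow> tens (basis [l1]) (f l2) | _ \<Rightarrow> 0)"

definition liftA :: "('a \<Rightarrow> ('a, 'k::comm_ring_1) comb) \<Rightarrow> 'a list \<Rightarrow> ('a, 'k) comb" where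
  "liftA D l = (case l of [x] \<Rightarrow> D x | _ \<Rightarrow> 0)"

definition eps_id :: "('a \<Rightarrow> 'k::comm_ring_1) \<Rightarrow> 'a list list \<Rightarrow> ('a, 'k) comb" where
  "eps_id eps w = (case w of [[x], [y]] \<Rightarrow> smul (eps x) (basis [[y]]) | _ \<Rightarrow> 0)"

definition left_counital_bialgebra ::
  "('k::comm_ring_1 \<Rightarrow> 'a::comm_ring_1) \<Rightarrow> ('a \<Rightarrow> ('a, 'k) comb) \<Rightarrow> ('a \<Rightarrow> 'k) \<Rightarrow> bool" where
  "left_counital_bialgebra phi D eps \<longleftrightarrow>
     \<comment> \<open>phi is a unital ring homomorphism (A is a k-algebra)\<close>
     (\<forall>c d. phi (c + d) = phi c + phi d) \<and> (\<forall>c d. phi (c * d) = phi c * phi d) \<and> phi 1 = 1 \<and>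
     \<comment> \<open>D takes values in A (x) A\<close>
     (\<forall>a. \<forall>w\<in>Poly_Mapping.keys (D a). \<exists>x y. w = [[x], [y]]) \<and>
     \<comment> \<open>D is k-linear\<close>
     (\<forall>a b. teq phi (D (a + b)) (D a + D b)) \<and>
     (\<forall>c a. teq phi (D (phi c * a)) (smul c (D a))) \<and>
     \<comment> \<open>D is an algebra homomorphism\<close>
     (\<forall>a b. teq phi (D (a * b)) (bullet (D a) (D b))) \<and>
     teq phi (D 1) (basis [[1], [1]]) \<and>
     \<comment> \<open>D is coassociative\<close>
     (\<forall>a. teq phi (lin (id_tens (liftA D)) (D a)) (lin (tens_id (liftA D)) (D a))) \<and>
     \<comment> \<open>eps is an algebra homomorphism\<close>
     (\<forall>a b. eps (a + b) = eps a + eps b) \<and> (\<forall>c a. eps (phi c * a) = c * eps a) \<and>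
     (\<forall>a b. eps (a * b) = eps a * eps b) \<and> eps 1 = 1 \<and>
     \<comment> \<open>left counicity: (eps (x) id) D = beta_l\<close>
     (\<forall>a. teq phi (lin (eps_id eps) (D a)) (basis [[a]]))"

end

theory Submission
  imports Defs
begin

text \<open>
  On a word, \<Delta>_T(a_1 \<otimes> \<dots> \<otimes> a_n) is the iterated product
  \<Delta>(a_1) \<bullet> (id \<otimes> P_r)(\<Delta>(a_2) \<bullet> (id \<otimes> P_r)(\<dots> \<Delta>(a_n))),
  the special case a_1 = 1 of the recursion being absorbed by \<Delta>(1) = 1 \<otimes> 1.
  Applying id \<otimes> \<Delta>_T, resp. \<Delta>_T \<otimes> id, to one step of this product yields the
  ternary product Z \<bullet> (id \<otimes> id \<otimes> P_r) W of Z = (id \<otimes> \<Delta>)\<Delta>(a_1), resp.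
  Z = (\<Delta> \<otimes> id)\<Delta>(a_1), with the image W of the rest of the word: exactly in the first
  case, and because \<Delta> is multiplicative in the second. Coassociativity of \<Delta> and induction
  on the word conclude. All identities are checked on pure tensors and transported to the tensor
  product by multilinearity of the maps involved.
\<close>

section \<open>Linear extension\<close>

lemma lookup_smul [simp]: "Poly_Mapping.lookup (smul c x) w = c * Poly_Mapping.lookup x w"
  unfolding smul_def by (simp add: Poly_Mapping.map.rep_eq when_def)

lemma smul_zero [simp]: "smul c 0 = 0"
  by (rule poly_mapping_eqI) simp

lemma smul_zero_left [simp]: "smul 0 x = 0"
  by (rule poly_mapping_eqI) simp

lemma smul_one [simp]: "smul 1 x = x"
  by (rule poly_mapping_eqI) simp

lemma smul_add_right: "smul c (x + y) = smul c x + smul c y"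
  by (rule poly_mapping_eqI) (simp add: lookup_add algebra_simps)

lemma smul_add_left: "smul (c + d) x = smul c x + smul d x"
  by (rule poly_mapping_eqI) (simp add: lookup_add algebra_simps)

lemma smul_diff_right: "smul c (x - y) = smul c x - smul c y"
  by (rule poly_mapping_eqI) (simp add: lookup_minus algebra_simps)

lemma smul_smul [simp]: "smul c (smul d x) = smul (c * d) x"
  by (rule poly_mapping_eqI) (simp add: algebra_simps)

lemma smul_minus_one: "smul (-1) x = - x"
  by (rule poly_mapping_eqI) simp

lemma smul_sum: "smul c (sum f S) = (\<Sum>i\<in>S. smul c (f i))"
  by (induction S rule: infinite_finite_induct) (auto simp: smul_add_right)

lemma keys_smul_subset: "Poly_Mapping.keys (smul c x) \<subseteq> Poly_Mapping.keys x"
  by (auto simp: in_keys_iff)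

lemma keys_basis: "Poly_Mapping.keys (basis w :: 'b \<Rightarrow>\<^sub>0 'k::comm_ring_1) = {w}"
  by (simp add: basis_def)

lemma lin_eq_sum_superset:
  assumes "finite S" "Poly_Mapping.keys x \<subseteq> S"
  shows "lin f x = (\<Sum>w\<in>S. smul (Poly_Mapping.lookup x w) (f w))"
  unfolding lin_def by (rule sum.mono_neutral_left) (auto simp: assms in_keys_iff)

lemma lin_zero [simp]: "lin f 0 = 0"
  by (simp add: lin_def)

lemma lin_add: "lin f (x + y) = lin f x + lin f y"
proof -
  let ?S = "Poly_Mapping.keys x \<union> Poly_Mapping.keys y"
  have "lin f (x + y) = (\<Sum>w\<in>?S. smul (Poly_Mapping.lookup (x + y) w) (f w))"
    by (rule lin_eq_sum_superset) (auto simp: keys_add)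
  also have "\<dots> = (\<Sum>w\<in>?S. smul (Poly_Mapping.lookup x w) (f w))
                + (\<Sum>w\<in>?S. smul (Poly_Mapping.lookup y w) (f w))"
    by (simp add: lookup_add smul_add_left sum.distrib)
  also have "\<dots> = lin f x + lin f y"
    by (subst (1 2) lin_eq_sum_superset[where S = ?S]) auto
  finally show ?thesis .
qed

lemma lin_smul: "lin f (smul c x) = smul c (lin f x)"
proof -
  have "lin f (smul c x) = (\<Sum>w\<in>Poly_Mapping.keys x. smul (Poly_Mapping.lookup (smul c x) w) (f w))"
    by (rule lin_eq_sum_superset) (auto simp: in_keys_iff)
  then show ?thesis
    by (simp add: lin_def smul_sum)
qed

lemma lin_diff: "lin f (x - y) = lin f x - lin f y"
  by (metis diff_conv_add_uminus lin_add lin_smul smul_minus_one)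

lemma lin_sum: "lin f (sum g S) = (\<Sum>i\<in>S. lin f (g i))"
  by (induction S rule: infinite_finite_induct) (auto simp: lin_add)

lemma lin_basis [simp]: "lin f (basis w) = f w"
proof -
  have "lin f (basis w) = (\<Sum>v\<in>{w}. smul (Poly_Mapping.lookup (basis w) v) (f v))"
    by (rule lin_eq_sum_superset) (simp_all add: keys_basis)
  then show ?thesis
    by (simp add: basis_def)
qed

lemma lin_basis_id: "lin basis x = x"
proof (rule poly_mapping_eqI)
  fix k
  show "Poly_Mapping.lookup (lin basis x) k = Poly_Mapping.lookup x k"
    unfolding lin_def basis_def
    by (cases "k \<in> Poly_Mapping.keys x")
       (auto simp: lookup_sum lookup_single when_def in_keys_iff if_distrib sum.delta' cong: if_cong)
qed

lemma lin_cong: "(\<And>w. w \<in> Poly_Mapping.keys x \<Longrightarrow> f w = g w) \<Longrightarrow> lin f x = lin g x"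
  by (simp add: lin_def)

lemma lin_zero_fun [simp]: "lin (\<lambda>w. 0) x = 0"
  by (simp add: lin_def)

lemma lin_diff_fun: "lin (\<lambda>w. f w - g w) x = lin f x - lin g x"
  by (simp add: lin_def smul_diff_right sum_subtractf)

lemma lin_smul_fun: "lin (\<lambda>w. smul c (f w)) x = smul c (lin f x)"
  by (simp add: lin_def smul_sum mult.commute)

lemma lin_lin: "lin g (lin f x) = lin (\<lambda>w. lin g (f w)) x"
  by (simp add: lin_def[of f] lin_sum lin_smul) (simp add: lin_def)

lemma lin_swap: "lin (\<lambda>u. lin (\<lambda>v. F u v) y) x = lin (\<lambda>v. lin (\<lambda>u. F u v) x) y"
  by (simp add: lin_def smul_sum sum.swap[of _ "Poly_Mapping.keys x"] mult.commute)

lemma keys_lin_subset: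
  "Poly_Mapping.keys (lin f x) \<subseteq> (\<Union>w\<in>Poly_Mapping.keys x. Poly_Mapping.keys (f w))"
  unfolding lin_def using keys_sum keys_smul_subset by fastforce

section \<open>Equality modulo the multilinearity relations\<close>

lemma trel_uminus: "x \<in> trel phi \<Longrightarrow> - x \<in> trel phi"
  by (metis smul_minus_one trel.smul)

lemma trel_sum: "(\<And>i. i \<in> S \<Longrightarrow> f i \<in> trel phi) \<Longrightarrow> sum f S \<in> trel phi"
  by (induction S rule: infinite_finite_induct) (auto intro: trel.intros)

lemma lin_in_trel: "(\<And>w. w \<in> Poly_Mapping.keys x \<Longrightarrow> f w \<in> trel phi) \<Longrightarrow> lin f x \<in> trel phi"
  unfolding lin_def by (rule trel_sum) (auto intro: trel.smul)

definition multilinear :: "('k::comm_ring_1 \<Rightarrow> 'a::comm_ring_1) \<Rightarrow> ('a list list \<Rightarrow> ('a, 'k) comb) \<Rightarrow> bool" where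
  "multilinear phi f \<longleftrightarrow> (\<forall>w i j a b c. i < length w \<longrightarrow> j < length (w ! i) \<longrightarrow>
     f (upd w i j (a + b)) - f (upd w i j a) - f (upd w i j b) \<in> trel phi \<and>
     f (upd w i j (phi c * a)) - smul c (f (upd w i j a)) \<in> trel phi)"

lemma lin_multilinear_in_trel:
  assumes "multilinear phi f" "x \<in> trel phi"
  shows "lin f x \<in> trel phi"
  using assms(2)
proof induction
  case zero
  show ?case by (simp add: trel.zero)
next
  case (add x y)
  then show ?case by (simp add: lin_add trel.add)
next
  case (smul x c)
  then show ?case by (simp add: lin_smul trel.smul)
next
  case (additive i w j a b)
  then show ?case using assms(1) by (simp add: lin_diff multilinear_def)
next
  case (homog i w j c a)
  then show ?case using assms(1) by (simp add: lin_diff lin_smul multilinear_def)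
qed

lemma multilinear_lin:
  assumes "\<And>v. multilinear phi (\<lambda>w. F w v)"
  shows "multilinear phi (\<lambda>w. lin (F w) y)"
  using assms
  by (simp add: multilinear_def lin_diff_fun[symmetric] lin_smul_fun[symmetric] lin_in_trel)

lemma teq_refl [simp]: "teq phi x x"
  by (simp add: teq_def trel.zero)

lemma teq_sym: "teq phi x y \<Longrightarrow> teq phi y x"
  unfolding teq_def by (metis minus_diff_eq trel_uminus)

lemma teq_trans [trans]:
  assumes "teq phi x y" "teq phi y z"
  shows "teq phi x z"
proof -
  have "(x - y) + (y - z) \<in> trel phi"
    using assms unfolding teq_def by (rule trel.add)
  then show ?thesis
    unfolding teq_def by simp
qed

lemma teq_lin: "(\<And>w. w \<in> Poly_Mapping.keys x \<Longrightarrow> teq phi (f w) (g w)) \<Longrightarrow> teq phi (lin f x) (lin g x)"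
  unfolding teq_def by (simp add: lin_diff_fun[symmetric] lin_in_trel)

lemma teq_lin_arg: "multilinear phi f \<Longrightarrow> teq phi x y \<Longrightarrow> teq phi (lin f x) (lin f y)"
  unfolding teq_def by (metis lin_diff lin_multilinear_in_trel)

lemma teq_lin_both:
  assumes "\<And>w. w \<in> Poly_Mapping.keys x \<Longrightarrow> teq phi (f w) (g w)"
    and "multilinear phi g" "teq phi x y"
  shows "teq phi (lin f x) (lin g y)"
  using teq_lin[OF assms(1)] teq_lin_arg[OF assms(2,3)] by (rule teq_trans)

section \<open>Words and tensor products\<close>

lemma length_upd [simp]: "length (upd w i j a) = length w"
  by (simp add: upd_def)

lemma length_nth_upd [simp]: "length (upd w i j a ! k) = length (w ! k)"
  by (cases "i < length w") (auto simp: upd_def nth_list_update list_update_beyond)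

lemma nth_upd_eq_Nil_iff [simp]: "upd w i j a ! k = [] \<longleftrightarrow> w ! k = []"
  by (metis length_0_conv length_nth_upd)

lemma upd_append_right: "u @ upd v i j a = upd (u @ v) (length u + i) j a"
  by (simp add: upd_def list_update_append nth_append)

lemma upd_append_left: "i < length u \<Longrightarrow> upd u i j a @ v = upd (u @ v) i j a"
  by (simp add: upd_def list_update_append nth_append)

lemma length2_cases: "length w = 2 \<Longrightarrow> (\<And>l1 l2. w = [l1, l2] \<Longrightarrow> P) \<Longrightarrow> P"
  by (cases w; cases "tl w"; auto)

lemma length3_cases: "length w = 3 \<Longrightarrow> (\<And>l1 l2 l3. w = [l1, l2, l3] \<Longrightarrow> P) \<Longrightarrow> P"
  by (cases w; cases "tl w"; cases "tl (tl w)"; auto)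

lemma multilinear_basisI:
  fixes g :: "'a::comm_ring_1 list list \<Rightarrow> 'a list list" and phi :: "'k::comm_ring_1 \<Rightarrow> 'a"
  assumes S: "\<And>w i j a. S (upd w i j a) = S w"
    and g: "\<And>w i j. S w \<Longrightarrow> i < length w \<Longrightarrow> j < length (w ! i) \<Longrightarrow>
       \<exists>i' j' m. i' < length (g w) \<and> j' < length (g w ! i') \<and> (\<forall>a. g (upd w i j a) = upd (g w) i' j' (m * a))"
  shows "multilinear phi (\<lambda>w. if S w then basis (g w) else 0)"
  unfolding multilinear_def
proof (intro allI impI)
  fix w :: "'a list list" and i j and a b :: 'a and c :: 'k
  assume ij: "i < length w" "j < length (w ! i)"
  show "(if S (upd w i j (a + b)) then basis (g (upd w i j (a + b))) else 0) -
        (if S (upd w i j a) then basis (g (upd w i j a)) else 0) -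
        (if S (upd w i j b) then basis (g (upd w i j b)) else 0) \<in> trel phi \<and>
        (if S (upd w i j (phi c * a)) then basis (g (upd w i j (phi c * a))) else 0) -
        smul c (if S (upd w i j a) then basis (g (upd w i j a)) else 0) \<in> trel phi"
  proof (cases "S w")
    case False
    then show ?thesis by (simp add: S trel.zero)
  next
    case True
    then obtain i' j' m where "i' < length (g w)" "j' < length (g w ! i')"
      and g_upd: "\<And>a. g (upd w i j a) = upd (g w) i' j' (m * a)"
      using g ij by blast
    moreover have "m * (a + b) = m * a + m * b" and "m * (phi c * a) = phi c * (m * a)"
      by (simp_all add: algebra_simps)
    ultimately show ?thesis
      using True by (simp only: S g_upd if_True) (simp add: trel.additive trel.homog)
  qed
qed

lemma multilinear_basis_append_left:
  fixes u :: "'a::comm_ring_1 list list" and phi :: "'k::comm_ring_1 \<Rightarrow> 'a"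
  shows "multilinear phi (\<lambda>v. basis (u @ v))"
proof -
  have "multilinear phi (\<lambda>v. if True then basis (u @ v) else 0)"
  proof (rule multilinear_basisI)
    fix w :: "'a list list" and i j
    assume "i < length w" "j < length (w ! i)"
    then show "\<exists>i' j' m. i' < length (u @ w) \<and> j' < length ((u @ w) ! i') \<and>
                 (\<forall>a. u @ upd w i j a = upd (u @ w) i' j' (m * a))"
      by (intro exI[of _ "length u + i"] exI[of _ j] exI[of _ 1]) (simp add: upd_append_right nth_append)
  qed simp
  then show ?thesis by simp
qed

lemma multilinear_basis_append_right:
  fixes v :: "'a::comm_ring_1 list list" and phi :: "'k::comm_ring_1 \<Rightarrow> 'a"
  shows "multilinear phi (\<lambda>u. basis (u @ v))"
proof -
  have "multilinear phi (\<lambda>u. if True then basis (u @ v) else 0)"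
  proof (rule multilinear_basisI)
    fix w :: "'a list list" and i j
    assume "i < length w" "j < length (w ! i)"
    then show "\<exists>i' j' m. i' < length (w @ v) \<and> j' < length ((w @ v) ! i') \<and>
                 (\<forall>a. upd w i j a @ v = upd (w @ v) i' j' (m * a))"
      by (intro exI[of _ i] exI[of _ j] exI[of _ 1]) (simp add: upd_append_left nth_append)
  qed simp
  then show ?thesis by simp
qed

lemma tens_basis_left: "tens (basis u) y = lin (\<lambda>v. basis (u @ v)) y"
  by (simp add: tens_def)

lemma tens_basis_right: "tens x (basis v) = lin (\<lambda>u. basis (u @ v)) x"
  by (simp add: tens_def)

lemma tens_basis: "tens (basis u) (basis v) = basis (u @ v)"
  by (simp add: tens_def)

lemma wrap_basis [simp]: "wrap (basis l) = basis [l]"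
  by (simp add: wrap_def)

lemma tens_diff_left: "tens (x - x') y = tens x y - tens x' y"
  by (simp add: tens_def lin_diff)

lemma tens_diff_right: "tens x (y - y') = tens x y - tens x y'"
  by (simp add: tens_def lin_diff lin_diff_fun)

lemma tens_smul_left: "tens (smul c x) y = smul c (tens x y)"
  by (simp add: tens_def lin_smul)

lemma tens_smul_right: "tens x (smul c y) = smul c (tens x y)"
  by (simp add: tens_def lin_smul lin_smul_fun)

lemma tens_teq_left: "teq phi x x' \<Longrightarrow> teq phi (tens x y) (tens x' y)"
  unfolding tens_def by (intro teq_lin_arg multilinear_lin multilinear_basis_append_right)

lemma tens_teq_right: "teq phi y y' \<Longrightarrow> teq phi (tens x y) (tens x y')"
  unfolding tens_def by (intro teq_lin teq_lin_arg multilinear_basis_append_left)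

lemma tens_in_trel_left: "x \<in> trel phi \<Longrightarrow> tens x y \<in> trel phi"
  using tens_teq_left[of phi x 0 y] by (simp add: teq_def tens_def)

lemma tens_in_trel_right: "y \<in> trel phi \<Longrightarrow> tens x y \<in> trel phi"
  using tens_teq_right[of phi y 0 x] by (simp add: teq_def tens_def)

definition A_word :: "nat \<Rightarrow> 'a list list \<Rightarrow> bool" where
  "A_word n w \<longleftrightarrow> length w = n \<and> (\<forall>i<n. length (w ! i) = 1)"

lemma A_word_upd [simp]: "A_word n (upd w i j a) = A_word n w"
  by (simp add: A_word_def)

lemma A_word_2_iff: "A_word 2 w \<longleftrightarrow> (\<exists>u v. w = [[u], [v]])"
  by (auto simp: A_word_def numeral_2_eq_2 less_Suc_eq length_Suc_conv)

lemma A_word_3_iff: "A_word 3 w \<longleftrightarrow> (\<exists>p q r. w = [[p], [q], [r]])"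
  by (auto simp: A_word_def numeral_3_eq_3 less_Suc_eq length_Suc_conv)

definition pair_word :: "'a list list \<Rightarrow> bool" where
  "pair_word w \<longleftrightarrow> length w = 2 \<and> w ! 0 \<noteq> []"

lemma pair_word_upd [simp]: "pair_word (upd w i j a) = pair_word w"
  by (simp add: pair_word_def)

lemma pair_word_iff: "pair_word w \<longleftrightarrow> (\<exists>x r l. w = [x # r, l])"
  by (auto simp: pair_word_def numeral_2_eq_2 length_Suc_conv neq_Nil_conv)

lemma id_tens_eq: "id_tens f w = (if length w = 2 then tens (basis [w ! 0]) (f (w ! 1)) else 0)"
  unfolding id_tens_def by (auto split: list.split elim: length2_cases)

lemma tens_id_eq: "tens_id f w = (if length w = 2 then tens (f (w ! 0)) (basis [w ! 1]) else 0)"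
  unfolding tens_id_def by (auto split: list.split elim: length2_cases)

definition multilinear1 :: "('k::comm_ring_1 \<Rightarrow> 'a::comm_ring_1) \<Rightarrow> ('a list \<Rightarrow> ('a, 'k) comb) \<Rightarrow> bool" where
  "multilinear1 phi f \<longleftrightarrow> (\<forall>l j a b c. j < length l \<longrightarrow>
     f (l[j := a + b]) - f (l[j := a]) - f (l[j := b]) \<in> trel phi \<and>
     f (l[j := phi c * a]) - smul c (f (l[j := a])) \<in> trel phi)"

lemma multilinear1_basis_singleton:
  fixes phi :: "'k::comm_ring_1 \<Rightarrow> 'a::comm_ring_1"
  shows "multilinear1 phi (\<lambda>l. basis [l])"
  unfolding multilinear1_def
proof (intro allI impI conjI)
  fix l :: "'a list" and j a b c
  assume "j < length l"
  then show "basis [l[j := a + b]] - basis [l[j := a]] - basis [l[j := b]] \<in> trel phi"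
    and "basis [l[j := phi c * a]] - smul c (basis [l[j := a]]) \<in> trel phi"
    using trel.additive[where i = 0 and w = "[l]" and phi = phi] trel.homog[where i = 0 and w = "[l]" and phi = phi] by (simp_all add: upd_def)
qed

lemma multilinear_id_tens:
  fixes f :: "'a::comm_ring_1 list \<Rightarrow> ('a, 'k::comm_ring_1) comb"
  assumes "multilinear1 phi f"
  shows "multilinear phi (id_tens f)"
  unfolding multilinear_def
proof (intro allI impI)
  fix w :: "'a list list" and i j and a b :: 'a and c :: 'k
  assume ij: "i < length w" "j < length (w ! i)"
  show "id_tens f (upd w i j (a + b)) - id_tens f (upd w i j a) - id_tens f (upd w i j b) \<in> trel phi \<and>
        id_tens f (upd w i j (phi c * a)) - smul c (id_tens f (upd w i j a)) \<in> trel phi"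
  proof (cases "length w = 2")
    case False
    then show ?thesis by (simp add: id_tens_eq trel.zero)
  next
    case True
    then obtain l1 l2 where w: "w = [l1, l2]" by (rule length2_cases)
    with ij consider "i = 0" | "i = 1" by fastforce
    then show ?thesis
    proof cases
      case 1
      then show ?thesis using w ij multilinear1_basis_singleton[of phi]
        by (simp add: id_tens_eq upd_def tens_diff_left[symmetric] tens_smul_left[symmetric]
            tens_in_trel_left multilinear1_def)
    next
      case 2
      then show ?thesis using w ij assms
        by (simp add: id_tens_eq upd_def tens_diff_right[symmetric] tens_smul_right[symmetric]
            tens_in_trel_right multilinear1_def)
    qed
  qed
qed

lemma multilinear_tens_id:
  fixes f :: "'a::comm_ring_1 list \<Rightarrow> ('a, 'k::comm_ring_1) comb"
  assumes "multilinear1 phi f"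
  shows "multilinear phi (tens_id f)"
  unfolding multilinear_def
proof (intro allI impI)
  fix w :: "'a list list" and i j and a b :: 'a and c :: 'k
  assume ij: "i < length w" "j < length (w ! i)"
  show "tens_id f (upd w i j (a + b)) - tens_id f (upd w i j a) - tens_id f (upd w i j b) \<in> trel phi \<and>
        tens_id f (upd w i j (phi c * a)) - smul c (tens_id f (upd w i j a)) \<in> trel phi"
  proof (cases "length w = 2")
    case False
    then show ?thesis by (simp add: tens_id_eq trel.zero)
  next
    case True
    then obtain l1 l2 where w: "w = [l1, l2]" by (rule length2_cases)
    with ij consider "i = 0" | "i = 1" by fastforce
    then show ?thesis
    proof cases
      case 1
      then show ?thesis using w ij assms
        by (simp add: tens_id_eq upd_def tens_diff_left[symmetric] tens_smul_left[symmetric]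
            tens_in_trel_left multilinear1_def)
    next
      case 2
      then show ?thesis using w ij multilinear1_basis_singleton[of phi]
        by (simp add: tens_id_eq upd_def tens_diff_right[symmetric] tens_smul_right[symmetric]
            tens_in_trel_right multilinear1_def)
    qed
  qed
qed

section \<open>Products with P_r inserted\<close>

text \<open>For X in A \<otimes> A, bulPr X Y represents X \<bullet> (id \<otimes> P_r) Y (lemma bullet_idPr).\<close>

definition bulPr_word :: "'a::comm_ring_1 list list \<Rightarrow> 'a list list \<Rightarrow> ('a, 'k::comm_ring_1) comb" where
  "bulPr_word z w = (if A_word 2 z \<and> pair_word w
     then basis [(z ! 0 ! 0 * hd (w ! 0)) # tl (w ! 0), (z ! 1 ! 0) # w ! 1] else 0)"

definition bulPr :: "('a::comm_ring_1, 'k::comm_ring_1) comb \<Rightarrow> ('a, 'k) comb \<Rightarrow> ('a, 'k) comb" where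
  "bulPr X Y = lin (\<lambda>z. lin (bulPr_word z) Y) X"

lemma bulPr_word_simp [simp]: "bulPr_word [[u], [v]] [x # r, l] = basis [(u * x) # r, v # l]"
  by (simp add: bulPr_word_def A_word_2_iff pair_word_def)

lemma multilinear_bulPr_word_right: "multilinear phi (bulPr_word z)"
  unfolding bulPr_word_def[abs_def]
  apply (rule multilinear_basisI)
   apply simp
  subgoal for w i j
  proof -
    assume "A_word 2 z \<and> pair_word w" and ij: "i < length w" "j < length (w ! i)"
    then obtain u v x r l where z: "z = [[u], [v]]" and w: "w = [x # r, l]"
      by (auto simp: A_word_2_iff pair_word_iff)
    from ij w consider "i = 0" "j = 0" | j' where "i = 0" "j = Suc j'" | "i = 1"
      by (cases j) fastforce+
    then show ?thesis
    proof cases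
      case 1
      then show ?thesis using z w
        by (intro exI[of _ 0] exI[of _ 0] exI[of _ u]) (simp add: upd_def)
    next
      case 2
      then show ?thesis using z w ij
        by (intro exI[of _ 0] exI[of _ j] exI[of _ 1]) (simp add: upd_def)
    next
      case 3
      then show ?thesis using z w ij
        by (intro exI[of _ 1] exI[of _ "Suc j"] exI[of _ 1]) (simp add: upd_def)
    qed
  qed
  done

lemma multilinear_bulPr_word_left: "multilinear phi (\<lambda>z. bulPr_word z w)"
  unfolding bulPr_word_def
  apply (rule multilinear_basisI)
   apply simp
  subgoal for z i j
  proof -
    assume "A_word 2 z \<and> pair_word w" and ij: "i < length z" "j < length (z ! i)"
    then obtain u v x r l where z: "z = [[u], [v]]" and w: "w = [x # r, l]"
      by (auto simp: A_word_2_iff pair_word_iff)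
    from ij z consider "i = 0" | "i = 1"
      by fastforce
    then show ?thesis
    proof cases
      case 1
      then show ?thesis using z w ij
        by (intro exI[of _ 0] exI[of _ 0] exI[of _ x]) (simp add: upd_def mult.commute)
    next
      case 2
      then show ?thesis using z w ij
        by (intro exI[of _ 1] exI[of _ 0] exI[of _ 1]) (simp add: upd_def)
    qed
  qed
  done

lemma bulPr_teq_left: "teq phi X X' \<Longrightarrow> teq phi (bulPr X Y) (bulPr X' Y)"
  unfolding bulPr_def by (intro teq_lin_arg multilinear_lin multilinear_bulPr_word_left)

lemma bulPr_teq_right: "teq phi Y Y' \<Longrightarrow> teq phi (bulPr X Y) (bulPr X Y')"
  unfolding bulPr_def by (intro teq_lin teq_lin_arg multilinear_bulPr_word_right)

lemma bulPr_in_trel_left: "X \<in> trel phi \<Longrightarrow> bulPr X Y \<in> trel phi"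
  unfolding bulPr_def by (intro lin_multilinear_in_trel multilinear_lin multilinear_bulPr_word_left)

lemma bulPr_in_trel_right: "Y \<in> trel phi \<Longrightarrow> bulPr X Y \<in> trel phi"
  unfolding bulPr_def by (intro lin_in_trel lin_multilinear_in_trel[OF multilinear_bulPr_word_right])

lemma bulPr_diff_left: "bulPr (X - X') Y = bulPr X Y - bulPr X' Y"
  by (simp add: bulPr_def lin_diff)

lemma bulPr_diff_right: "bulPr X (Y - Y') = bulPr X Y - bulPr X Y'"
  by (simp add: bulPr_def lin_diff lin_diff_fun)

lemma bulPr_smul_left: "bulPr (smul c X) Y = smul c (bulPr X Y)"
  by (simp add: bulPr_def lin_smul)

lemma bulPr_smul_right: "bulPr X (smul c Y) = smul c (bulPr X Y)"
  by (simp add: bulPr_def lin_smul lin_smul_fun)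

definition idPr_word :: "'a::comm_ring_1 list list \<Rightarrow> ('a, 'k::comm_ring_1) comb" where
  "idPr_word w = (if length w = 2 then basis [w ! 0, 1 # w ! 1] else 0)"

lemma idPr_eq_lin: "idPr x = lin idPr_word x"
  unfolding idPr_def idPr_word_def
  by (rule lin_cong) (auto split: list.split elim: length2_cases)

lemma multilinear_idPr_word: "multilinear phi idPr_word"
  unfolding idPr_word_def[abs_def]
  apply (rule multilinear_basisI)
   apply simp
  subgoal for w i j
  proof -
    assume "length w = 2" and ij: "i < length w" "j < length (w ! i)"
    then consider "i = 0" | "i = 1"
      by fastforce
    then show ?thesis
    proof cases
      case 1
      then show ?thesis using ij
        by (intro exI[of _ 0] exI[of _ j] exI[of _ 1]) (simp add: upd_def)
    next
      case 2
      then show ?thesis using ij \<open>length w = 2\<close>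
        by (intro exI[of _ 1] exI[of _ "Suc j"] exI[of _ 1]) (simp add: upd_def nth_list_update)
    qed
  qed
  done

lemma idPr_teq: "teq phi x y \<Longrightarrow> teq phi (idPr x) (idPr y)"
  unfolding idPr_eq_lin by (rule teq_lin_arg[OF multilinear_idPr_word])

definition sh_pair_word :: "'a list list \<Rightarrow> bool" where
  "sh_pair_word w \<longleftrightarrow> (\<exists>l1 l2. w = [l1, l2] \<and> l1 \<noteq> [] \<and> l2 \<noteq> [])"

lemma keys_idPr:
  assumes "\<And>w. w \<in> Poly_Mapping.keys Y \<Longrightarrow> sh_pair_word w" and "w \<in> Poly_Mapping.keys (idPr Y)"
  shows "sh_pair_word w"
  using assms(2) unfolding idPr_eq_lin
  by (auto dest!: keys_lin_subset[THEN subsetD] assms(1) simp: idPr_word_def sh_pair_word_def keys_basis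
      split: if_splits)

lemma keys_bulPr: "w \<in> Poly_Mapping.keys (bulPr X Y) \<Longrightarrow> sh_pair_word w"
  unfolding bulPr_def
  by (auto dest!: keys_lin_subset[THEN subsetD] simp: bulPr_word_def keys_basis sh_pair_word_def split: if_splits)

lemma bulPr_unit:
  assumes "\<And>z. z \<in> Poly_Mapping.keys X \<Longrightarrow> A_word 2 z"
  shows "bulPr X (basis [[1], []]) = X"
proof -
  have "bulPr X (basis [[1], []]) = lin basis X"
    unfolding bulPr_def by (rule lin_cong) (auto dest!: assms simp: A_word_2_iff)
  then show ?thesis
    by (simp add: lin_basis_id)
qed

lemma bulPr_one_eq_idPr:
  assumes "\<And>w. w \<in> Poly_Mapping.keys Y \<Longrightarrow> pair_word w"
  shows "bulPr (basis [[1], [1]]) Y = idPr Y"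
  unfolding bulPr_def idPr_eq_lin lin_basis
  by (rule lin_cong) (auto dest!: assms simp: pair_word_iff idPr_word_def)

lemma dia_singleton_left: "dia [a] (x # r) = basis ((a * x) # r)"
  by (cases r) simp_all

lemma bullet_idPr:
  assumes "\<And>z. z \<in> Poly_Mapping.keys X \<Longrightarrow> A_word 2 z"
  shows "bullet X (idPr Y) = bulPr X Y"
  unfolding bullet_def bulPr_def
proof (rule lin_cong)
  fix z
  assume "z \<in> Poly_Mapping.keys X"
  then obtain u v where z: "z = [[u], [v]]"
    using assms unfolding A_word_2_iff by blast
  have bulW_idPr_word: "lin (bulW z) (idPr_word w) = bulPr_word z w" for w :: "'a list list"
  proof (cases "pair_word w")
    case True
    then obtain x r l where "w = [x # r, l]"
      by (auto simp: pair_word_iff)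
    then show ?thesis
      using z by (simp add: idPr_word_def dia_singleton_left tens_basis)
  next
    case False
    then show ?thesis
      using z by (auto simp: idPr_word_def bulPr_word_def pair_word_def wrap_def tens_def elim!: length2_cases)
  qed
  show "lin (bulW z) (idPr Y) = lin (bulPr_word z) Y"
    by (simp add: idPr_eq_lin lin_lin bulW_idPr_word)
qed

text \<open>For Z in A \<otimes> A \<otimes> A, bulPr3 Z W represents Z \<bullet> (id \<otimes> id \<otimes> P_r) W.\<close>

definition bulPr3_word :: "'a::comm_ring_1 list list \<Rightarrow> 'a list list \<Rightarrow> ('a, 'k::comm_ring_1) comb" where
  "bulPr3_word z w = (if A_word 3 z \<and> length w = 3 \<and> w ! 0 \<noteq> [] \<and> w ! 1 \<noteq> []
     then basis [(z ! 0 ! 0 * hd (w ! 0)) # tl (w ! 0), (z ! 1 ! 0 * hd (w ! 1)) # tl (w ! 1),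
                 (z ! 2 ! 0) # w ! 2]
     else 0)"

definition bulPr3 :: "('a::comm_ring_1, 'k::comm_ring_1) comb \<Rightarrow> ('a, 'k) comb \<Rightarrow> ('a, 'k) comb" where
  "bulPr3 Z W = lin (\<lambda>z. lin (bulPr3_word z) W) Z"

lemma bulPr3_word_simp [simp]:
  "bulPr3_word [[p], [q], [r]] [x # s, y # t, m] = basis [(p * x) # s, (q * y) # t, r # m]"
  by (simp add: bulPr3_word_def A_word_3_iff)

lemma multilinear_bulPr3_word_right: "multilinear phi (bulPr3_word z)"
  unfolding bulPr3_word_def[abs_def]
  apply (rule multilinear_basisI)
   apply simp
  subgoal for w i j
  proof -
    assume "A_word 3 z \<and> length w = 3 \<and> w ! 0 \<noteq> [] \<and> w ! 1 \<noteq> []"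
      and ij: "i < length w" "j < length (w ! i)"
    then obtain p q r x s y t m where z: "z = [[p], [q], [r]]" and w: "w = [x # s, y # t, m]"
      by (auto simp: A_word_3_iff neq_Nil_conv elim!: length3_cases)
    from ij w consider "i = 0" "j = 0" | j' where "i = 0" "j = Suc j'" | "i = 1" "j = 0"
      | j' where "i = 1" "j = Suc j'" | "i = 2"
      by (cases j) (fastforce simp: less_Suc_eq numeral_3_eq_3)+
    then show ?thesis
    proof cases
      case 1
      then show ?thesis using z w
        by (intro exI[of _ 0] exI[of _ 0] exI[of _ p]) (simp add: upd_def)
    next
      case 2
      then show ?thesis using z w ij
        by (intro exI[of _ 0] exI[of _ j] exI[of _ 1]) (simp add: upd_def)
    next
      case 3
      then show ?thesis using z w
        by (intro exI[of _ 1] exI[of _ 0] exI[of _ q]) (simp add: upd_def)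
    next
      case 4
      then show ?thesis using z w ij
        by (intro exI[of _ 1] exI[of _ j] exI[of _ 1]) (simp add: upd_def)
    next
      case 5
      then show ?thesis using z w ij
        by (intro exI[of _ 2] exI[of _ "Suc j"] exI[of _ 1]) (simp add: upd_def numeral_2_eq_2)
    qed
  qed
  done

lemma multilinear_bulPr3_word_left: "multilinear phi (\<lambda>z. bulPr3_word z w)"
  unfolding bulPr3_word_def
  apply (rule multilinear_basisI)
   apply simp
  subgoal for z i j
  proof -
    assume "A_word 3 z \<and> length w = 3 \<and> w ! 0 \<noteq> [] \<and> w ! 1 \<noteq> []"
      and ij: "i < length z" "j < length (z ! i)"
    then obtain p q r x s y t m where z: "z = [[p], [q], [r]]" and w: "w = [x # s, y # t, m]"
      by (auto simp: A_word_3_iff neq_Nil_conv elim!: length3_cases)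
    from ij z consider "i = 0" | "i = 1" | "i = 2"
      by fastforce
    then show ?thesis
    proof cases
      case 1
      then show ?thesis using z w ij
        by (intro exI[of _ 0] exI[of _ 0] exI[of _ x]) (simp add: upd_def mult.commute)
    next
      case 2
      then show ?thesis using z w ij
        by (intro exI[of _ 1] exI[of _ 0] exI[of _ y]) (simp add: upd_def mult.commute)
    next
      case 3
      then show ?thesis using z w ij
        by (intro exI[of _ 2] exI[of _ 0] exI[of _ 1]) (simp add: upd_def numeral_2_eq_2)
    qed
  qed
  done

lemma bulPr3_teq_left: "teq phi Z Z' \<Longrightarrow> teq phi (bulPr3 Z W) (bulPr3 Z' W)"
  unfolding bulPr3_def by (intro teq_lin_arg multilinear_lin multilinear_bulPr3_word_left)

lemma bulPr3_teq_right: "teq phi W W' \<Longrightarrow> teq phi (bulPr3 Z W) (bulPr3 Z W')"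
  unfolding bulPr3_def by (intro teq_lin teq_lin_arg multilinear_bulPr3_word_right)

lemma bulPr3_basis [simp]: "bulPr3 (basis z) (basis w) = bulPr3_word z w"
  by (simp add: bulPr3_def)

lemma bulPr3_lin_left: "bulPr3 (lin f Z) W = lin (\<lambda>z. bulPr3 (f z) W) Z"
  by (simp add: bulPr3_def lin_lin)

lemma bulPr3_lin_right: "bulPr3 Z (lin g W) = lin (\<lambda>w. bulPr3 Z (g w)) W"
  by (simp add: bulPr3_def lin_lin lin_swap[of _ W])

lemma bulPr3_lin_lin: "bulPr3 (lin f Z) (lin g W) = lin (\<lambda>z. lin (\<lambda>w. bulPr3 (f z) (g w)) W) Z"
  by (simp only: bulPr3_lin_left) (simp only: bulPr3_lin_right)

lemma bulPr_lin_left: "bulPr (lin f X) Y = lin (\<lambda>z. bulPr (f z) Y) X"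
  by (simp add: bulPr_def lin_lin)

lemma bulPr_basis_left: "bulPr (basis z) Y = lin (bulPr_word z) Y"
  by (simp add: bulPr_def)

lemma tens_lin_left: "tens (lin f X) Y = lin (\<lambda>z. tens (f z) Y) X"
  by (simp add: tens_def lin_lin)

lemma tens_basis_bulPr:
  assumes X: "\<And>z. z \<in> Poly_Mapping.keys X \<Longrightarrow> A_word 2 z"
    and Y: "\<And>w. w \<in> Poly_Mapping.keys Y \<Longrightarrow> pair_word w"
  shows "tens (basis [(u * x) # r]) (bulPr X Y) = bulPr3 (tens (basis [[u]]) X) (tens (basis [x # r]) Y)"
proof -
  have "tens (basis [(u * x) # r]) (bulPr X Y) =
      lin (\<lambda>z. lin (\<lambda>w. lin (\<lambda>v. basis ([(u * x) # r] @ v)) (bulPr_word z w)) Y) X"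
    by (simp add: tens_basis_left bulPr_def lin_lin)
  also have "\<dots> = lin (\<lambda>z. lin (\<lambda>w. bulPr3 (basis ([u] # z)) (basis ((x # r) # w))) Y) X"
    by (intro lin_cong) (auto dest!: X Y simp: A_word_2_iff pair_word_iff)
  also have "\<dots> = bulPr3 (tens (basis [[u]]) X) (tens (basis [x # r]) Y)"
    by (simp only: tens_basis_left bulPr3_lin_lin append_Cons append_Nil)
  finally show ?thesis .
qed

lemma tens_bulPr_basis_split:
  assumes Y: "\<And>w. w \<in> Poly_Mapping.keys Y \<Longrightarrow> pair_word w"
  shows "tens (bulPr (basis [[u1 * x1], [u2 * x2]]) Y) (basis [v # l]) =
    bulPr3 (basis [[u1], [u2], [v]]) (tens (bulPr (basis [[x1], [x2]]) Y) (basis [l]))"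
  by (simp add: bulPr_basis_left tens_lin_left tens_basis bulPr3_lin_right)
     (intro lin_cong, auto dest!: Y simp: pair_word_iff mult.assoc tens_basis)

lemma tens_bulPr_bullet_basis:
  assumes X: "\<And>z. z \<in> Poly_Mapping.keys X \<Longrightarrow> A_word 2 z"
    and X': "\<And>z. z \<in> Poly_Mapping.keys X' \<Longrightarrow> A_word 2 z"
    and Y: "\<And>w. w \<in> Poly_Mapping.keys Y \<Longrightarrow> pair_word w"
  shows "tens (bulPr (bullet X X') Y) (basis [v # l]) =
    bulPr3 (tens X (basis [[v]])) (tens (bulPr X' Y) (basis [l]))"
proof -
  have "tens (bulPr (bullet X X') Y) (basis [v # l]) =
      lin (\<lambda>z. lin (\<lambda>z'. tens (bulPr (bulW z z') Y) (basis [v # l])) X') X"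
    by (simp add: bullet_def bulPr_lin_left tens_lin_left)
  also have "\<dots> = lin (\<lambda>z. lin (\<lambda>z'. bulPr3 (basis (z @ [[v]])) (tens (bulPr (basis z') Y) (basis [l]))) X') X"
    by (intro lin_cong) (auto dest!: X X' simp: A_word_2_iff tens_basis tens_bulPr_basis_split Y)
  also have "\<dots> = bulPr3 (tens X (basis [[v]])) (tens (bulPr X' Y) (basis [l]))"
  proof -
    have "tens (bulPr X' Y) (basis [l]) = lin (\<lambda>z'. tens (bulPr (basis z') Y) (basis [l])) X'"
      using bulPr_lin_left[of basis X' Y] by (simp add: lin_basis_id tens_lin_left)
    then show ?thesis
      by (simp only: tens_basis_right[of X] bulPr3_lin_lin)
  qed
  finally show ?thesis .
qed

section \<open>Coassociativity of Delta_T\<close>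

text \<open>
  Delta_fold D agrees with DeltaT D on nonempty words up to the relations (lemma
  DeltaT_teq_Delta_fold); sending the empty word to 1 \<otimes> [] lets the induction start there.
\<close>

fun Delta_fold :: "('a::comm_ring_1 \<Rightarrow> ('a, 'k::comm_ring_1) comb) \<Rightarrow> 'a list \<Rightarrow> ('a, 'k) comb" where
  "Delta_fold D [] = basis [[1], []]"
| "Delta_fold D (a # l) = bulPr (D a) (Delta_fold D l)"

lemma keys_Delta_fold:
  assumes "w \<in> Poly_Mapping.keys (Delta_fold D l)"
  shows "pair_word w"
proof (cases l)
  case Nil
  then show ?thesis
    using assms by (simp add: keys_basis pair_word_def)
next
  case (Cons a l')
  then have "sh_pair_word w"
    using assms keys_bulPr by simp
  then show ?thesis
    by (auto simp: sh_pair_word_def pair_word_def)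
qed

context
  fixes phi :: "'k::comm_ring_1 \<Rightarrow> 'a::comm_ring_1" and D :: "'a \<Rightarrow> ('a, 'k) comb" and eps :: "'a \<Rightarrow> 'k"
  assumes bialgebra: "left_counital_bialgebra phi D eps"
begin

lemma keys_D: "w \<in> Poly_Mapping.keys (D a) \<Longrightarrow> A_word 2 w"
  using bialgebra unfolding left_counital_bialgebra_def A_word_2_iff by blast

lemma D_add: "teq phi (D (a + b)) (D a + D b)"
  and D_smul: "teq phi (D (phi c * a)) (smul c (D a))"
  and D_mult: "teq phi (D (a * b)) (bullet (D a) (D b))"
  and D_one: "teq phi (D 1) (basis [[1], [1]])"
  and D_coassoc: "teq phi (lin (id_tens (liftA D)) (D a)) (lin (tens_id (liftA D)) (D a))"
  using bialgebra unfolding left_counital_bialgebra_def by blast+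

lemma Delta_fold_singleton: "Delta_fold D [a] = D a"
  using keys_D by (simp add: bulPr_unit)

lemma DeltaT_Cons_Cons: "a \<noteq> 1 \<Longrightarrow> DeltaT D (a # b # l) = bulPr (D a) (DeltaT D (b # l))"
  using keys_D by (simp add: bullet_idPr)

lemma keys_DeltaT:
  assumes "l \<noteq> []" "w \<in> Poly_Mapping.keys (DeltaT D l)"
  shows "sh_pair_word w"
  using assms
proof (induction l arbitrary: w rule: list_nonempty_induct)
  case (single a)
  then show ?case
    using keys_D by (fastforce simp: A_word_2_iff sh_pair_word_def)
next
  case (cons a l)
  then obtain b l' where l: "l = b # l'"
    by (cases l) auto
  show ?case
  proof (cases "a = 1")
    case True
    then show ?thesis
      using cons keys_idPr[of "DeltaT D l"] by (simp add: l)
  next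
    case False
    then have "w \<in> Poly_Mapping.keys (bulPr (D a) (DeltaT D l))"
      using cons.prems by (simp only: l DeltaT_Cons_Cons[OF False])
    then show ?thesis
      by (rule keys_bulPr)
  qed
qed

lemma DeltaT_teq_Delta_fold:
  assumes "l \<noteq> []"
  shows "teq phi (DeltaT D l) (Delta_fold D l)"
  using assms
proof (induction l rule: list_nonempty_induct)
  case (single a)
  show ?case
    by (simp only: DeltaT.simps Delta_fold_singleton teq_refl)
next
  case (cons a l)
  then obtain b l' where l: "l = b # l'"
    by (cases l) auto
  show ?case
  proof (cases "a = 1")
    case True
    have "teq phi (idPr (DeltaT D l)) (idPr (Delta_fold D l))"
      using cons.IH by (rule idPr_teq)
    also have "idPr (Delta_fold D l) = bulPr (basis [[1], [1]]) (Delta_fold D l)"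
      by (rule bulPr_one_eq_idPr[symmetric]) (rule keys_Delta_fold)
    also have "teq phi \<dots> (bulPr (D 1) (Delta_fold D l))"
      by (rule bulPr_teq_left, rule teq_sym, rule D_one)
    finally show ?thesis
      using True by (simp add: l)
  next
    case False
    then show ?thesis
      using cons.IH by (simp only: l DeltaT_Cons_Cons[OF False] Delta_fold.simps bulPr_teq_right)
  qed
qed

lemma multilinear1_Delta_fold: "multilinear1 phi (Delta_fold D)"
  unfolding multilinear1_def
proof (intro allI impI)
  fix l :: "'a list" and j a b c
  assume "j < length l"
  then show "Delta_fold D (l[j := a + b]) - Delta_fold D (l[j := a]) - Delta_fold D (l[j := b]) \<in> trel phi \<and>
      Delta_fold D (l[j := phi c * a]) - smul c (Delta_fold D (l[j := a])) \<in> trel phi"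
  proof (induction l arbitrary: j)
    case Nil
    then show ?case by simp
  next
    case (Cons x l)
    show ?case
    proof (cases j)
      case 0
      have "D (a + b) - D a - D b \<in> trel phi" "D (phi c * a) - smul c (D a) \<in> trel phi"
        using D_add D_smul by (simp_all add: teq_def diff_diff_eq)
      then show ?thesis
        using 0 by (simp add: bulPr_diff_left[symmetric] bulPr_smul_left[symmetric] bulPr_in_trel_left)
    next
      case (Suc j')
      then show ?thesis
        using Cons by (simp add: bulPr_diff_right[symmetric] bulPr_smul_right[symmetric] bulPr_in_trel_right)
    qed
  qed
qed

lemma id_tens_Delta_fold_bulPr:
  assumes X: "\<And>z. z \<in> Poly_Mapping.keys X \<Longrightarrow> A_word 2 z"
    and Y: "\<And>w. w \<in> Poly_Mapping.keys Y \<Longrightarrow> pair_word w"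
  shows "lin (id_tens (Delta_fold D)) (bulPr X Y) =
    bulPr3 (lin (id_tens (liftA D)) X) (lin (id_tens (Delta_fold D)) Y)"
proof -
  have "lin (id_tens (Delta_fold D)) (bulPr X Y) =
      lin (\<lambda>z. lin (\<lambda>w. lin (id_tens (Delta_fold D)) (bulPr_word z w)) Y) X"
    by (simp add: bulPr_def lin_lin)
  also have "\<dots> = lin (\<lambda>z. lin (\<lambda>w. bulPr3 (id_tens (liftA D) z) (id_tens (Delta_fold D) w)) Y) X"
    by (intro lin_cong)
       (auto dest!: X Y simp: A_word_2_iff pair_word_iff id_tens_def liftA_def
         intro!: tens_basis_bulPr keys_D keys_Delta_fold)
  also have "\<dots> = bulPr3 (lin (id_tens (liftA D)) X) (lin (id_tens (Delta_fold D)) Y)"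
    by (simp only: bulPr3_lin_lin)
  finally show ?thesis .
qed

lemma tens_id_Delta_fold_bulPr_word:
  "teq phi (tens_id (Delta_fold D) [(u * x) # r, v # l])
     (bulPr3 (tens_id (liftA D) [[u], [v]]) (tens_id (Delta_fold D) [x # r, l]))"
proof -
  have "tens_id (Delta_fold D) [(u * x) # r, v # l] =
      tens (bulPr (D (u * x)) (Delta_fold D r)) (basis [v # l])"
    by (simp add: tens_id_def)
  also have "teq phi \<dots> (tens (bulPr (bullet (D u) (D x)) (Delta_fold D r)) (basis [v # l]))"
    by (intro tens_teq_left bulPr_teq_left D_mult)
  also have "tens (bulPr (bullet (D u) (D x)) (Delta_fold D r)) (basis [v # l]) =
      bulPr3 (tens (D u) (basis [[v]])) (tens (bulPr (D x) (Delta_fold D r)) (basis [l]))"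
    by (intro tens_bulPr_bullet_basis keys_D keys_Delta_fold)
  also have "\<dots> = bulPr3 (tens_id (liftA D) [[u], [v]]) (tens_id (Delta_fold D) [x # r, l])"
    by (simp add: tens_id_def liftA_def)
  finally show ?thesis .
qed

lemma tens_id_Delta_fold_bulPr:
  assumes X: "\<And>z. z \<in> Poly_Mapping.keys X \<Longrightarrow> A_word 2 z"
    and Y: "\<And>w. w \<in> Poly_Mapping.keys Y \<Longrightarrow> pair_word w"
  shows "teq phi (lin (tens_id (Delta_fold D)) (bulPr X Y))
    (bulPr3 (lin (tens_id (liftA D)) X) (lin (tens_id (Delta_fold D)) Y))"
proof -
  have "lin (tens_id (Delta_fold D)) (bulPr X Y) =
      lin (\<lambda>z. lin (\<lambda>w. lin (tens_id (Delta_fold D)) (bulPr_word z w)) Y) X"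
    by (simp add: bulPr_def lin_lin)
  also have "teq phi \<dots> (lin (\<lambda>z. lin (\<lambda>w. bulPr3 (tens_id (liftA D) z) (tens_id (Delta_fold D) w)) Y) X)"
    by (intro teq_lin) (auto dest!: X Y simp: A_word_2_iff pair_word_iff tens_id_Delta_fold_bulPr_word)
  also have "\<dots> = bulPr3 (lin (tens_id (liftA D)) X) (lin (tens_id (Delta_fold D)) Y)"
    by (simp only: bulPr3_lin_lin)
  finally show ?thesis .
qed

lemma Delta_fold_coassoc:
  "teq phi (lin (id_tens (Delta_fold D)) (Delta_fold D l)) (lin (tens_id (Delta_fold D)) (Delta_fold D l))"
proof (induction l)
  case Nil
  have "lin (id_tens (Delta_fold D)) (Delta_fold D []) = tens (basis [[1], [1]]) (basis [[]])"
    by (simp add: id_tens_def tens_basis)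
  also have "teq phi \<dots> (tens (D 1) (basis [[]]))"
    by (intro tens_teq_left teq_sym[OF D_one])
  also have "tens (D 1) (basis [[]]) = lin (tens_id (Delta_fold D)) (Delta_fold D [])"
    by (simp add: tens_id_def Delta_fold_singleton del: Delta_fold.simps(2))
  finally show ?case .
next
  case (Cons a l)
  have "lin (id_tens (Delta_fold D)) (Delta_fold D (a # l)) =
      bulPr3 (lin (id_tens (liftA D)) (D a)) (lin (id_tens (Delta_fold D)) (Delta_fold D l))"
    by (simp add: id_tens_Delta_fold_bulPr keys_D keys_Delta_fold)
  also have "teq phi \<dots> (bulPr3 (lin (tens_id (liftA D)) (D a)) (lin (id_tens (Delta_fold D)) (Delta_fold D l)))"
    by (rule bulPr3_teq_left[OF D_coassoc])
  also have "teq phi \<dots> (bulPr3 (lin (tens_id (liftA D)) (D a)) (lin (tens_id (Delta_fold D)) (Delta_fold D l)))"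
    by (rule bulPr3_teq_right[OF Cons.IH])
  also have "teq phi \<dots> (lin (tens_id (Delta_fold D)) (Delta_fold D (a # l)))"
    by (simp add: teq_sym tens_id_Delta_fold_bulPr keys_D keys_Delta_fold)
  finally show ?case .
qed

lemma id_tens_DeltaT_teq_Delta_fold:
  assumes "l \<noteq> []"
  shows "teq phi (lin (id_tens (DeltaT D)) (DeltaT D l)) (lin (id_tens (Delta_fold D)) (Delta_fold D l))"
proof (rule teq_lin_both)
  fix w
  assume "w \<in> Poly_Mapping.keys (DeltaT D l)"
  with assms have "sh_pair_word w"
    by (rule keys_DeltaT)
  then show "teq phi (id_tens (DeltaT D) w) (id_tens (Delta_fold D) w)"
    by (auto simp: sh_pair_word_def id_tens_def intro!: tens_teq_right DeltaT_teq_Delta_fold)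
qed (use assms multilinear1_Delta_fold in \<open>auto intro: multilinear_id_tens DeltaT_teq_Delta_fold\<close>)

lemma tens_id_DeltaT_teq_Delta_fold:
  assumes "l \<noteq> []"
  shows "teq phi (lin (tens_id (DeltaT D)) (DeltaT D l)) (lin (tens_id (Delta_fold D)) (Delta_fold D l))"
proof (rule teq_lin_both)
  fix w
  assume "w \<in> Poly_Mapping.keys (DeltaT D l)"
  with assms have "sh_pair_word w"
    by (rule keys_DeltaT)
  then show "teq phi (tens_id (DeltaT D) w) (tens_id (Delta_fold D) w)"
    by (auto simp: sh_pair_word_def tens_id_def intro!: tens_teq_left DeltaT_teq_Delta_fold)
qed (use assms multilinear1_Delta_fold in \<open>auto intro: multilinear_tens_id DeltaT_teq_Delta_fold\<close>)

end

theorem proposition3p6: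
  fixes phi :: "'k::comm_ring_1 \<Rightarrow> 'a::comm_ring_1"
    and D :: "'a \<Rightarrow> ('a, 'k) comb"
    and eps :: "'a \<Rightarrow> 'k"
    and x :: "'a list \<Rightarrow>\<^sub>0 'k"
  assumes "left_counital_bialgebra phi D eps"
    and "\<forall>l\<in>Poly_Mapping.keys x. l \<noteq> []"
  shows "teq phi (lin (id_tens (DeltaT D)) (lin (DeltaT D) x))
                 (lin (tens_id (DeltaT D)) (lin (DeltaT D) x))"
  unfolding lin_lin
proof (rule teq_lin)
  fix l
  assume "l \<in> Poly_Mapping.keys x"
  then have "l \<noteq> []"
    using assms(2) by blast
  have "teq phi (lin (id_tens (DeltaT D)) (DeltaT D l)) (lin (id_tens (Delta_fold D)) (Delta_fold D l))"
    using assms(1) \<open>l \<noteq> []\<close> by (rule id_tens_DeltaT_teq_Delta_fold)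
  also have "teq phi \<dots> (lin (tens_id (Delta_fold D)) (Delta_fold D l))"
    using assms(1) by (rule Delta_fold_coassoc)
  also have "teq phi \<dots> (lin (tens_id (DeltaT D)) (DeltaT D l))"
    using assms(1) \<open>l \<noteq> []\<close> by (rule teq_sym[OF tens_id_DeltaT_teq_Delta_fold])
  finally show "teq phi (lin (id_tens (DeltaT D)) (DeltaT D l)) (lin (tens_id (DeltaT D)) (DeltaT D l))" .
qed

end
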